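(* Let $b_1>0$, $b_1^*\ge0$, $b_2^*\ge0$, $\sigma>0$, and $\sigma_2^2=\sigma^2+(b_2^* )^2$. With $\alpha\sim N(0,1)$ and $y\sim N(0,\sigma_2^2)$ independent and $u=\frac{\alpha b_1}{\sigma^2}(y+\alpha b_1^* )$, define $S=\mathbb{E}[\tanh(u)+u\tanh'(u)]$. Then $$1-\Bigg(\sqrt{1+\frac{\min\big(\frac{\sigma_2^2}{\sigma^2}b_1,\,b_1^*\big)\,b_1^*}{\sigma_2^2}}\Bigg)^{-1}\le S\le1.$$ *)

theory Defs
  imports "HOL-Probability.Probability"
begin

end

theory Submission
  imports Defs "HOL-Real_Asymp.Real_Asymp"
begin

text \<open>
Write f(u) = tanh u + u sech^2 u, the derivative of u tanh u, and u = \<alpha> c (y + \<alpha> b) with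
c = b1 / \<sigma>^2 and b = b1s.

Upper bound: for fixed y, u = p \<alpha> + k \<alpha>^2 with k = c b \<ge> 0. The derivative of H(\<alpha>) = \<alpha> tanh u
is f(u) + k \<alpha>^2 sech^2 u \<ge> f(u), and Stein's identity E[H'(\<alpha>)] = E[\<alpha> H(\<alpha>)] for a standard
normal \<alpha> gives E[f(u)] \<le> E[\<alpha>^2 tanh u] \<le> E[\<alpha>^2] = 1.

Lower bound: for fixed \<alpha> \<noteq> 0, u is normal with mean m = \<alpha>^2 c b \<ge> 0 and standard deviation
s = |\<alpha> c| \<sigma>2. Tilting by e^(k u) with k = m / s^2 and symmetrising u \<mapsto> -u (f is odd) turns
E[1 - f(u)] into e^(-k^2 s^2 / 2) times the N(0, s^2)-mean of cosh (k u) - f(u) sinh (k u), and this is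
at most cosh ((k - 1) u) / cosh u. For k \<le> 1 that is at most 1; for k > 1 it is at most
cosh ((k - 1) u), whose mean is e^((k - 1)^2 s^2 / 2). Either way
E[1 - f(u)] \<le> exp (- min (m^2 / s^2) m / 2) = exp (- K \<alpha>^2 / 2) with K = min (\<sigma>2^2 c) b * b / \<sigma>2^2,
and finally E[exp (- K \<alpha>^2 / 2)] = 1 / sqrt (1 + K).
\<close>

definition tanh_plus_u_sech2 :: "real \<Rightarrow> real" where
  "tanh_plus_u_sech2 u = tanh u + u * (1 - (tanh u)\<^sup>2)"

lemma borel_measurable_hyperbolic [measurable]:
  "(sinh :: real \<Rightarrow> real) \<in> borel_measurable borel"
  "(cosh :: real \<Rightarrow> real) \<in> borel_measurable borel"
  "(tanh :: real \<Rightarrow> real) \<in> borel_measurable borel"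
  by (intro borel_measurable_continuous_onI continuous_intros; simp)+

lemma deriv_tanh_real: "deriv tanh (u::real) = 1 - (tanh u)\<^sup>2"
  by (rule DERIV_imp_deriv) (auto intro!: derivative_eq_intros)

lemma abs_tanh_real_le_1: "\<bar>tanh (u::real)\<bar> \<le> 1"
  using tanh_real_bounds[of u] by (simp add: abs_le_iff)

lemma one_minus_tanh_sq_nonneg: "0 \<le> 1 - (tanh (u::real))\<^sup>2"
  using abs_tanh_real_le_1 by (simp add: abs_square_le_1)

lemma one_minus_tanh_sq_eq: "1 - (tanh (u::real))\<^sup>2 = 1 / (cosh u)\<^sup>2"
proof -
  have "(cosh u)\<^sup>2 - (sinh u)\<^sup>2 = 1"
    by (simp add: cosh_square_eq)
  then show ?thesis
    by (simp add: tanh_def divide_simps)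
qed

lemma abs_le_cosh_sq: "\<bar>u::real\<bar> \<le> (cosh u)\<^sup>2"
proof -
  have "(1 + \<bar>u\<bar>) / 2 \<le> cosh \<bar>u\<bar>"
    using exp_ge_add_one_self[of "\<bar>u\<bar>"] exp_gt_zero[of "-\<bar>u\<bar>"]
    unfolding cosh_def by (simp add: divide_simps del: exp_ge_add_one_self exp_gt_zero)
  then have "((1 + \<bar>u\<bar>) / 2)\<^sup>2 \<le> (cosh u)\<^sup>2"
    by (intro power_mono) auto
  moreover have "\<bar>u\<bar> \<le> ((1 + \<bar>u\<bar>) / 2)\<^sup>2"
    using zero_le_power2[of "\<bar>u\<bar> - 1"] by (simp add: power2_eq_square field_simps)
  ultimately show ?thesis
    by linarith
qed

lemma abs_mult_one_minus_tanh_sq_le_1: "\<bar>u::real\<bar> * (1 - (tanh u)\<^sup>2) \<le> 1"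
  using abs_le_cosh_sq[of u] by (simp add: one_minus_tanh_sq_eq field_simps)

lemma abs_tanh_plus_u_sech2_le: "\<bar>tanh_plus_u_sech2 u\<bar> \<le> 2"
proof -
  have "\<bar>u * (1 - (tanh u)\<^sup>2)\<bar> \<le> 1"
    using abs_mult_one_minus_tanh_sq_le_1[of u] one_minus_tanh_sq_nonneg[of u] by (simp add: abs_mult)
  then show ?thesis
    using abs_tanh_real_le_1[of u] abs_triangle_ineq[of "tanh u" "u * (1 - (tanh u)\<^sup>2)"]
    unfolding tanh_plus_u_sech2_def by linarith
qed

lemma tanh_plus_u_sech2_minus: "tanh_plus_u_sech2 (-u) = - tanh_plus_u_sech2 u"
  by (simp add: tanh_plus_u_sech2_def)

lemma borel_measurable_tanh_plus_u_sech2 [measurable]: "tanh_plus_u_sech2 \<in> borel_measurable borel"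
  unfolding tanh_plus_u_sech2_def by measurable

section \<open>Gaussian integrals\<close>

lemma normal_density_mult_exp:
  assumes "s > 0"
  shows "normal_density m s u * exp (t * u) = exp (t * m + t\<^sup>2 * s\<^sup>2 / 2) * normal_density (m + t * s\<^sup>2) s u"
proof -
  have "-(u - m)\<^sup>2 / (2 * s\<^sup>2) + t * u = t * m + t\<^sup>2 * s\<^sup>2 / 2 + -(u - (m + t * s\<^sup>2))\<^sup>2 / (2 * s\<^sup>2)"
    using assms by (simp add: field_simps power2_eq_square)
  then show ?thesis
    unfolding normal_density_def by (simp add: mult_exp_exp ac_simps)
qed

lemma integrable_normal_density_mult_exp:
  "s > 0 \<Longrightarrow> integrable lborel (\<lambda>u. normal_density m s u * exp (t * u))"
  by (simp add: normal_density_mult_exp)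

lemma integral_normal_density_mult_exp:
  "s > 0 \<Longrightarrow> (\<integral>u. normal_density m s u * exp (t * u) \<partial>lborel) = exp (t * m + t\<^sup>2 * s\<^sup>2 / 2)"
  by (simp add: normal_density_mult_exp)

lemma integral_normal_density_tilt:
  assumes "s > 0"
  shows "(\<integral>u. normal_density m s u * g u \<partial>lborel)
    = exp (- (m\<^sup>2 / (2 * s\<^sup>2))) * (\<integral>u. normal_density 0 s u * (exp (m/s\<^sup>2 * u) * g u) \<partial>lborel)"
proof -
  have "m/s\<^sup>2 * s\<^sup>2 = m" "(m/s\<^sup>2)\<^sup>2 * s\<^sup>2 / 2 = m\<^sup>2 / (2 * s\<^sup>2)"
    using assms by (simp_all add: power2_eq_square)
  then have "normal_density 0 s u * exp (m/s\<^sup>2 * u) = exp (m\<^sup>2 / (2 * s\<^sup>2)) * normal_density m s u" for u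
    using normal_density_mult_exp[OF assms, of 0 u "m/s\<^sup>2"] by simp
  then have "normal_density m s u = exp (- (m\<^sup>2 / (2 * s\<^sup>2))) * (normal_density 0 s u * exp (m/s\<^sup>2 * u))" for u
    by (simp add: exp_minus)
  then show ?thesis
    by (simp add: mult.assoc)
qed

lemma normal_density_zero_minus [simp]: "normal_density 0 s (-u) = normal_density 0 s u"
  by (simp add: normal_density_def)

lemma integral_normal_density_reflect:
  "(\<integral>u. normal_density 0 s u * g (-u) \<partial>lborel) = (\<integral>u. normal_density 0 s u * g u \<partial>lborel)"
  using lborel_integral_real_affine[of "-1" "\<lambda>u. normal_density 0 s u * g u" 0] by simp

lemma integrable_normal_density_reflect:
  "integrable lborel (\<lambda>u. normal_density 0 s u * g u) \<Longrightarrow>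
   integrable lborel (\<lambda>u. normal_density 0 s u * g (-u))"
  using lborel_integrable_real_affine[of "\<lambda>u. normal_density 0 s u * g u" "-1" 0] by simp

lemma integral_normal_density_affine:
  assumes "A \<noteq> 0" "\<sigma> > 0"
  shows "(\<integral>y. normal_density \<mu> \<sigma> y * F (A * y + m) \<partial>lborel)
    = (\<integral>u. normal_density (A * \<mu> + m) (\<bar>A\<bar> * \<sigma>) u * F u \<partial>lborel)"
proof -
  have "\<bar>A\<bar> * normal_density (A * \<mu> + m) (\<bar>A\<bar> * \<sigma>) (m + A * y) = normal_density \<mu> \<sigma> y" for y
    using assms by (simp add: normal_density_def real_sqrt_mult field_simps) (simp add: power2_eq_square field_simps)
  then show ?thesis
    using lborel_integral_real_affine[OF assms(1), of "\<lambda>u. normal_density (A * \<mu> + m) (\<bar>A\<bar> * \<sigma>) u * F u" m]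
    by (simp add: mult.assoc[symmetric] add.commute flip: integral_mult_right_zero)
qed

lemma has_bochner_integral_std_normal_exp_neg_sq:
  assumes "K > -1"
  shows "has_bochner_integral std_normal_distribution (\<lambda>a. exp (- K * a\<^sup>2 / 2)) (1 / sqrt (1 + K))"
proof -
  let ?s = "1 / sqrt (1 + K)"
  have K1: "1 + K > 0" and s: "?s > 0"
    using assms by auto
  have "std_normal_density a * exp (- K * a\<^sup>2 / 2) = normal_density 0 ?s a / sqrt (1 + K)" for a
  proof -
    have "exp (- a\<^sup>2 / 2) * exp (- K * a\<^sup>2 / 2) = exp (- a\<^sup>2 / (2 * ?s\<^sup>2))"
      using K1 by (simp flip: exp_add add: field_simps power_divide)
    moreover have "sqrt (2 * pi * ?s\<^sup>2) = sqrt (2 * pi) / sqrt (1 + K)"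
      using K1 by (simp add: power_divide real_sqrt_divide real_sqrt_mult)
    ultimately show ?thesis
      using K1 by (simp add: normal_density_def std_normal_density_def field_simps)
  qed
  then have "has_bochner_integral lborel (\<lambda>a. std_normal_density a * exp (- K * a\<^sup>2 / 2)) ?s"
    using integrable_normal_density[OF s, of 0] integral_normal_density[OF s, of 0]
    by (simp add: has_bochner_integral_iff)
  then show ?thesis
    by (intro has_bochner_integral_density) simp_all
qed

section \<open>Stein's identity\<close>

lemma integral_lborel_FTC:
  fixes F f :: "real \<Rightarrow> real"
  assumes "\<And>x. (F has_real_derivative f x) (at x)" and "\<And>x. isCont f x"
    and "integrable lborel f"
    and "(F \<longlongrightarrow> a) at_bot" and "(F \<longlongrightarrow> b) at_top"
  shows "integral\<^sup>L lborel f = b - a"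
proof -
  have "(LBINT x=-\<infinity>..\<infinity>. f x) = b - a"
    by (rule interval_integral_FTC_integrable)
      (use assms in \<open>auto simp: has_real_derivative_iff_has_vector_derivative set_integrable_def
        ereal_tendsto_simps\<close>)
  then show ?thesis
    by (simp add: interval_lebesgue_integral_def set_lebesgue_integral_def)
qed

lemma has_real_derivative_std_normal_density:
  "(std_normal_density has_real_derivative (- x * std_normal_density x)) (at x)"
  unfolding std_normal_density_def[abs_def]
  by (auto intro!: derivative_eq_intros simp: power2_eq_square field_simps)

lemma stein_identity_std_normal:
  fixes H H' :: "real \<Rightarrow> real"
  assumes deriv: "\<And>x. (H has_real_derivative H' x) (at x)" and cont: "\<And>x. isCont H' x"
    and int_deriv: "integrable lborel (\<lambda>x. std_normal_density x * H' x)"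
    and int_mult: "integrable lborel (\<lambda>x. std_normal_density x * (x * H x))"
    and "((\<lambda>x. std_normal_density x * H x) \<longlongrightarrow> 0) at_bot"
    and "((\<lambda>x. std_normal_density x * H x) \<longlongrightarrow> 0) at_top"
  shows "(\<integral>x. std_normal_density x * H' x \<partial>lborel) = (\<integral>x. std_normal_density x * (x * H x) \<partial>lborel)"
proof -
  have "(\<integral>x. std_normal_density x * H' x - std_normal_density x * (x * H x) \<partial>lborel) = 0 - 0"
  proof (rule integral_lborel_FTC)
    show "((\<lambda>x. std_normal_density x * H x) has_real_derivative
        std_normal_density x * H' x - std_normal_density x * (x * H x)) (at x)" for x
      by (auto intro!: derivative_eq_intros has_real_derivative_std_normal_density deriv
          simp: algebra_simps)
    show "isCont (\<lambda>x. std_normal_density x * H' x - std_normal_density x * (x * H x)) x" for x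
      using DERIV_isCont[OF deriv] cont unfolding std_normal_density_def
      by (intro continuous_intros) auto
  qed (use assms in auto)
  then show ?thesis
    using int_deriv int_mult by simp
qed

lemma tendsto_mult_std_normal_density:
  "((\<lambda>x. x * std_normal_density x) \<longlongrightarrow> 0) at_bot"
  "((\<lambda>x. x * std_normal_density x) \<longlongrightarrow> 0) at_top"
  unfolding std_normal_density_def by real_asymp+

lemma tendsto_std_normal_density_mult_bounded:
  assumes "\<And>x. \<bar>G x\<bar> \<le> B"
  shows "((\<lambda>x. std_normal_density x * (x * G x)) \<longlongrightarrow> 0) at_bot"
    and "((\<lambda>x. std_normal_density x * (x * G x)) \<longlongrightarrow> 0) at_top"
proof -
  have bound: "norm (std_normal_density x * (x * G x)) \<le> norm (x * std_normal_density x) * B" for x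
    using mult_left_mono[OF assms[of x], of "\<bar>x\<bar> * std_normal_density x"] by (simp add: abs_mult mult_ac)
  note lim = tendsto_mult_std_normal_density[THEN tendsto_norm_zero, THEN tendsto_mult_left_zero]
  show "((\<lambda>x. std_normal_density x * (x * G x)) \<longlongrightarrow> 0) at_bot"
    by (rule Lim_null_comparison[OF always_eventually[OF allI[OF bound]] lim(1)])
  show "((\<lambda>x. std_normal_density x * (x * G x)) \<longlongrightarrow> 0) at_top"
    by (rule Lim_null_comparison[OF always_eventually[OF allI[OF bound]] lim(2)])
qed

lemma integrable_std_normal_density_quadratic_bound:
  assumes "g \<in> borel_measurable borel" and "\<And>x. \<bar>g x\<bar> \<le> A + B * \<bar>x\<bar> + C * x\<^sup>2"
  shows "integrable lborel (\<lambda>x. std_normal_density x * g x)"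
proof (rule Bochner_Integration.integrable_bound)
  show "integrable lborel (\<lambda>x. A * std_normal_density x + B * (std_normal_density x * \<bar>x\<bar> ^ 1)
      + C * (std_normal_density x * x ^ 2))"
    using integrable_std_normal_moment_abs[of 1] integrable_std_normal_moment[of 2] by simp
  show "AE x in lborel. norm (std_normal_density x * g x) \<le> norm (A * std_normal_density x
      + B * (std_normal_density x * \<bar>x\<bar> ^ 1) + C * (std_normal_density x * x ^ 2))"
  proof (rule AE_I2)
    fix x
    have "std_normal_density x * \<bar>g x\<bar> \<le> std_normal_density x * (A + B * \<bar>x\<bar> + C * x\<^sup>2)"
      using assms(2) by (intro mult_left_mono) auto
    then show "norm (std_normal_density x * g x) \<le> norm (A * std_normal_density x
        + B * (std_normal_density x * \<bar>x\<bar> ^ 1) + C * (std_normal_density x * x ^ 2))"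
      by (simp add: abs_mult algebra_simps)
  qed
qed (use assms in measurable)

section \<open>The upper bound\<close>

lemma has_real_derivative_mult_tanh_quadratic:
  "((\<lambda>a. a * tanh (p * a + k * a\<^sup>2)) has_real_derivative
      tanh_plus_u_sech2 (p * a + k * a\<^sup>2) + k * a\<^sup>2 * (1 - (tanh (p * a + k * a\<^sup>2))\<^sup>2)) (at a)"
  by (auto intro!: derivative_eq_intros simp: tanh_plus_u_sech2_def power2_eq_square algebra_simps)

lemma integral_std_normal_tanh_plus_u_sech2_quadratic_le_1:
  assumes "k \<ge> 0"
  shows "(\<integral>a. std_normal_density a * tanh_plus_u_sech2 (p * a + k * a\<^sup>2) \<partial>lborel) \<le> 1"
proof -
  let ?\<phi> = std_normal_density and ?u = "\<lambda>a. p * a + k * a\<^sup>2"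
  define H' where "H' a = tanh_plus_u_sech2 (?u a) + k * a\<^sup>2 * (1 - (tanh (?u a))\<^sup>2)" for a
  have deriv: "((\<lambda>a. a * tanh (?u a)) has_real_derivative H' a) (at a)" for a
    unfolding H'_def by (rule has_real_derivative_mult_tanh_quadratic)
  have cont: "isCont H' a" for a
    unfolding H'_def tanh_plus_u_sech2_def by (intro continuous_intros) simp_all
  have sech2: "0 \<le> 1 - (tanh (?u a))\<^sup>2" "1 - (tanh (?u a))\<^sup>2 \<le> 1" for a
    using one_minus_tanh_sq_nonneg by auto
  have le_H': "tanh_plus_u_sech2 (?u a) \<le> H' a" for a
    using assms sech2 by (simp add: H'_def)
  have "\<bar>H' a\<bar> \<le> 2 + k * a\<^sup>2" for a
  proof -
    have "0 \<le> k * a\<^sup>2 * (1 - (tanh (?u a))\<^sup>2)" "k * a\<^sup>2 * (1 - (tanh (?u a))\<^sup>2) \<le> k * a\<^sup>2"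
      using assms sech2[of a] by (simp_all add: mult_left_le)
    then show ?thesis
      using abs_tanh_plus_u_sech2_le[of "?u a"] unfolding H'_def abs_le_iff by simp
  qed
  then have int_H': "integrable lborel (\<lambda>a. ?\<phi> a * H' a)"
    by (intro integrable_std_normal_density_quadratic_bound[where A=2 and B=0 and C=k])
      (simp_all add: H'_def)
  have abs_aaT: "\<bar>a * (a * tanh (?u a))\<bar> \<le> a\<^sup>2" for a
  proof -
    have "\<bar>a * (a * tanh (?u a))\<bar> = a\<^sup>2 * \<bar>tanh (?u a)\<bar>"
      by (simp add: abs_mult power2_eq_square)
    then show ?thesis
      using abs_tanh_real_le_1[of "?u a"] by (simp add: mult_left_le)
  qed
  then have int_aH: "integrable lborel (\<lambda>a. ?\<phi> a * (a * (a * tanh (?u a))))"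
    by (intro integrable_std_normal_density_quadratic_bound[where A=0 and B=0 and C=1]) simp_all
  have "(\<integral>a. ?\<phi> a * tanh_plus_u_sech2 (?u a) \<partial>lborel) \<le> (\<integral>a. ?\<phi> a * H' a \<partial>lborel)"
    using abs_tanh_plus_u_sech2_le le_H'
    by (intro integral_mono int_H' integrable_std_normal_density_quadratic_bound[where B=0 and C=0])
      (auto intro: mult_left_mono)
  also have "\<dots> = (\<integral>a. ?\<phi> a * (a * (a * tanh (?u a))) \<partial>lborel)"
    using abs_tanh_real_le_1
    by (intro stein_identity_std_normal[OF deriv cont int_H' int_aH] tendsto_std_normal_density_mult_bounded)
  also have "\<dots> \<le> (\<integral>a. ?\<phi> a * a ^ 2 \<partial>lborel)"
    using int_aH integrable_std_normal_moment[of 2] abs_aaT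
    by (intro integral_mono) (auto intro!: mult_left_mono simp: abs_le_iff)
  also have "\<dots> = 1"
    using integral_std_normal_moment_even[of 1] by simp
  finally show ?thesis .
qed

section \<open>The lower bound\<close>

lemma cosh_minus_tanh_plus_u_sech2_mult_sinh_le:
  assumes "k \<ge> 0"
  shows "cosh (k * u) - tanh_plus_u_sech2 u * sinh (k * u) \<le> cosh ((k - 1) * u) / cosh u"
proof -
  have "0 \<le> u * sinh (k * u)"
    using assms by (cases "u \<ge> 0") (auto simp: zero_le_mult_iff mult_nonneg_nonpos)
  then have "0 \<le> u * sinh (k * u) * (1 - (tanh u)\<^sup>2)"
    using one_minus_tanh_sq_nonneg by simp
  then have "tanh u * sinh (k * u) \<le> tanh_plus_u_sech2 u * sinh (k * u)"
    by (simp add: tanh_plus_u_sech2_def algebra_simps)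
  moreover have "cosh (k * u) - tanh u * sinh (k * u) = cosh ((k - 1) * u) / cosh u"
    by (simp add: tanh_def field_simps left_diff_distrib cosh_diff)
  ultimately show ?thesis by linarith
qed

lemma abs_cosh_minus_tanh_plus_u_sech2_mult_sinh_le:
  "\<bar>cosh (k * u) - tanh_plus_u_sech2 u * sinh (k * u)\<bar> \<le> 3/2 * (exp (k * u) + exp ((-k) * u))"
proof -
  have "\<bar>sinh (k * u)\<bar> \<le> cosh (k * u)"
    using sinh_le_cosh_real[of "k * u"] sinh_le_cosh_real[of "-(k * u)"] by (simp add: abs_le_iff)
  then have "\<bar>tanh_plus_u_sech2 u * sinh (k * u)\<bar> \<le> 2 * cosh (k * u)"
    using abs_tanh_plus_u_sech2_le[of u] by (simp add: abs_mult mult_mono)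
  then have "\<bar>cosh (k * u) - tanh_plus_u_sech2 u * sinh (k * u)\<bar> \<le> 3 * cosh (k * u)"
    using abs_triangle_ineq4[of "cosh (k * u)" "tanh_plus_u_sech2 u * sinh (k * u)"] by simp
  then show ?thesis
    by (simp add: cosh_def)
qed

lemma integrable_normal_density_cosh_minus_mult_sinh:
  assumes "s > 0"
  shows "integrable lborel (\<lambda>u. normal_density 0 s u * (cosh (k * u) - tanh_plus_u_sech2 u * sinh (k * u)))"
proof (rule Bochner_Integration.integrable_bound)
  let ?\<phi> = "normal_density 0 s"
  show "integrable lborel (\<lambda>u. 3/2 * (?\<phi> u * exp (k * u) + ?\<phi> u * exp ((-k) * u)))"
    by (intro Bochner_Integration.integrable_add integrable_mult_right integrable_normal_density_mult_exp assms)
  show "AE u in lborel. norm (?\<phi> u * (cosh (k * u) - tanh_plus_u_sech2 u * sinh (k * u)))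
      \<le> norm (3/2 * (?\<phi> u * exp (k * u) + ?\<phi> u * exp ((-k) * u)))"
  proof (rule AE_I2)
    fix u
    have "norm (?\<phi> u * (cosh (k * u) - tanh_plus_u_sech2 u * sinh (k * u)))
        = ?\<phi> u * \<bar>cosh (k * u) - tanh_plus_u_sech2 u * sinh (k * u)\<bar>"
      by (simp add: abs_mult)
    also have "\<dots> \<le> ?\<phi> u * (3/2 * (exp (k * u) + exp ((-k) * u)))"
      by (intro mult_left_mono abs_cosh_minus_tanh_plus_u_sech2_mult_sinh_le) simp
    also have "\<dots> = norm (3/2 * (?\<phi> u * exp (k * u) + ?\<phi> u * exp ((-k) * u)))"
      by (simp add: algebra_simps)
    finally show "norm (?\<phi> u * (cosh (k * u) - tanh_plus_u_sech2 u * sinh (k * u)))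
      \<le> norm (3/2 * (?\<phi> u * exp (k * u) + ?\<phi> u * exp ((-k) * u)))" .
  qed
qed measurable

text \<open>Exponential tilting by e^(k u) with k = m / s^2, then symmetrisation u \<mapsto> -u.\<close>

lemma integral_normal_density_one_minus_tanh_plus_u_sech2_eq:
  assumes "s > 0"
  shows "(\<integral>u. normal_density m s u * (1 - tanh_plus_u_sech2 u) \<partial>lborel) = exp (- (m\<^sup>2 / (2 * s\<^sup>2))) *
    (\<integral>u. normal_density 0 s u * (cosh (m/s\<^sup>2 * u) - tanh_plus_u_sech2 u * sinh (m/s\<^sup>2 * u)) \<partial>lborel)"
proof -
  define k where "k = m / s\<^sup>2"
  let ?\<phi> = "normal_density 0 s"
  define g where "g u = exp (k * u) * (1 - tanh_plus_u_sech2 u)" for u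
  have int_g: "integrable lborel (\<lambda>u. ?\<phi> u * g u)"
  proof (rule Bochner_Integration.integrable_bound)
    show "integrable lborel (\<lambda>u. 3 * (?\<phi> u * exp (k * u)))"
      by (intro integrable_mult_right integrable_normal_density_mult_exp assms)
    show "AE u in lborel. norm (?\<phi> u * g u) \<le> norm (3 * (?\<phi> u * exp (k * u)))"
    proof (rule AE_I2)
      fix u
      have "\<bar>1 - tanh_plus_u_sech2 u\<bar> \<le> 3"
        using abs_tanh_plus_u_sech2_le[of u] by linarith
      then have "?\<phi> u * \<bar>g u\<bar> \<le> ?\<phi> u * (3 * exp (k * u))"
        by (intro mult_left_mono) (auto simp: g_def abs_mult)
      then show "norm (?\<phi> u * g u) \<le> norm (3 * (?\<phi> u * exp (k * u)))"
        by (simp add: abs_mult mult_ac)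
    qed
  qed (simp add: g_def)
  have "?\<phi> u * (cosh (k * u) - tanh_plus_u_sech2 u * sinh (k * u)) = (?\<phi> u * g u + ?\<phi> u * g (-u)) / 2" for u
    by (simp add: g_def tanh_plus_u_sech2_minus cosh_def sinh_def field_simps)
  then have "(\<integral>u. ?\<phi> u * (cosh (k * u) - tanh_plus_u_sech2 u * sinh (k * u)) \<partial>lborel)
      = (\<integral>u. (?\<phi> u * g u + ?\<phi> u * g (-u)) / 2 \<partial>lborel)"
    by (simp only:)
  also have "\<dots> = ((\<integral>u. ?\<phi> u * g u \<partial>lborel) + (\<integral>u. ?\<phi> u * g (-u) \<partial>lborel)) / 2"
    using int_g integrable_normal_density_reflect[OF int_g] by simp
  also have "\<dots> = (\<integral>u. ?\<phi> u * g u \<partial>lborel)"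
    by (simp add: integral_normal_density_reflect)
  finally show ?thesis
    using integral_normal_density_tilt[OF assms, of m "\<lambda>u. 1 - tanh_plus_u_sech2 u"]
    by (simp add: g_def k_def)
qed

lemma integral_normal_density_cosh_minus_mult_sinh_le_1:
  assumes "s > 0" and "0 \<le> k" and "k \<le> 2"
  shows "(\<integral>u. normal_density 0 s u * (cosh (k * u) - tanh_plus_u_sech2 u * sinh (k * u)) \<partial>lborel) \<le> 1"
proof -
  have "\<bar>(k - 1) * u\<bar> \<le> \<bar>u\<bar>" for u
    using assms by (simp add: abs_mult mult_left_le_one_le)
  then have "cosh ((k - 1) * u) / cosh u \<le> 1" for u
    using cosh_real_nonneg_le_iff[of "\<bar>(k - 1) * u\<bar>" "\<bar>u\<bar>"] by simp
  then have le_1: "cosh (k * u) - tanh_plus_u_sech2 u * sinh (k * u) \<le> 1" for u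
    using cosh_minus_tanh_plus_u_sech2_mult_sinh_le[OF assms(2), of u] by (meson order_trans)
  have "(\<integral>u. normal_density 0 s u * (cosh (k * u) - tanh_plus_u_sech2 u * sinh (k * u)) \<partial>lborel)
      \<le> (\<integral>u. normal_density 0 s u \<partial>lborel)"
    by (intro integral_mono integrable_normal_density_cosh_minus_mult_sinh integrable_normal_density
        assms mult_left_le) (simp_all add: le_1)
  then show ?thesis
    using integral_normal_density[OF assms(1)] by simp
qed

lemma integral_normal_density_cosh_minus_mult_sinh_le_exp:
  assumes "s > 0" and "0 \<le> k"
  shows "(\<integral>u. normal_density 0 s u * (cosh (k * u) - tanh_plus_u_sech2 u * sinh (k * u)) \<partial>lborel)
    \<le> exp ((k - 1)\<^sup>2 * s\<^sup>2 / 2)"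
proof -
  let ?\<phi> = "normal_density 0 s"
  have "cosh (k * u) - tanh_plus_u_sech2 u * sinh (k * u) \<le> (exp ((k - 1) * u) + exp ((1 - k) * u)) / 2" for u
  proof -
    have "cosh ((k - 1) * u) / cosh u \<le> cosh ((k - 1) * u)"
      using cosh_real_ge_1[of u] by (simp add: divide_le_eq)
    then show ?thesis
      using cosh_minus_tanh_plus_u_sech2_mult_sinh_le[OF assms(2), of u] by (simp add: cosh_def algebra_simps)
  qed
  then have "?\<phi> u * (cosh (k * u) - tanh_plus_u_sech2 u * sinh (k * u))
      \<le> ?\<phi> u * ((exp ((k - 1) * u) + exp ((1 - k) * u)) / 2)" for u
    by (intro mult_left_mono) simp_all
  then have "?\<phi> u * (cosh (k * u) - tanh_plus_u_sech2 u * sinh (k * u))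
      \<le> (?\<phi> u * exp ((k - 1) * u) + ?\<phi> u * exp ((1 - k) * u)) / 2" for u
    by (simp add: distrib_left)
  then have "(\<integral>u. ?\<phi> u * (cosh (k * u) - tanh_plus_u_sech2 u * sinh (k * u)) \<partial>lborel)
      \<le> (\<integral>u. (?\<phi> u * exp ((k - 1) * u) + ?\<phi> u * exp ((1 - k) * u)) / 2 \<partial>lborel)"
    by (intro integral_mono integrable_normal_density_cosh_minus_mult_sinh assms integrable_divide_zero
        Bochner_Integration.integrable_add integrable_normal_density_mult_exp)
  also have "\<dots> = exp ((k - 1)\<^sup>2 * s\<^sup>2 / 2)"
    using integrable_normal_density_mult_exp[OF assms(1)] integral_normal_density_mult_exp[OF assms(1)]
    by (simp add: power2_commute)
  finally show ?thesis .
qed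

lemma integral_normal_density_one_minus_tanh_plus_u_sech2_le:
  assumes "s > 0" and "m \<ge> 0"
  shows "(\<integral>u. normal_density m s u * (1 - tanh_plus_u_sech2 u) \<partial>lborel) \<le> exp (- min (m\<^sup>2 / s\<^sup>2) m / 2)"
proof -
  define k where "k = m / s\<^sup>2"
  have k: "k \<ge> 0" "m = k * s\<^sup>2" "m\<^sup>2 / (2 * s\<^sup>2) = k\<^sup>2 * s\<^sup>2 / 2" "m\<^sup>2 / s\<^sup>2 = k * m"
    using assms by (auto simp: k_def power2_eq_square)
  let ?I = "\<integral>u. normal_density 0 s u * (cosh (k * u) - tanh_plus_u_sech2 u * sinh (k * u)) \<partial>lborel"
  have eq: "(\<integral>u. normal_density m s u * (1 - tanh_plus_u_sech2 u) \<partial>lborel) = exp (- (k\<^sup>2 * s\<^sup>2 / 2)) * ?I"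
    using integral_normal_density_one_minus_tanh_plus_u_sech2_eq[OF assms(1), of m]
    unfolding k_def[symmetric] k(3) .
  show ?thesis
  proof (cases "k \<le> 1")
    case True
    then have "min (m\<^sup>2 / s\<^sup>2) m = k\<^sup>2 * s\<^sup>2"
      using k assms(2) by (simp add: mult_left_le_one_le power2_eq_square)
    moreover have "?I \<le> 1"
      using True k by (intro integral_normal_density_cosh_minus_mult_sinh_le_1 assms) simp_all
    ultimately show ?thesis
      unfolding eq by (simp add: mult_left_le)
  next
    case False
    then have "m \<le> m\<^sup>2 / s\<^sup>2"
      unfolding k(4) using assms(2) mult_right_mono[of 1 k m] by simp
    then have "min (m\<^sup>2 / s\<^sup>2) m = m"
      by (simp add: min_def)
    have "exp (- (k\<^sup>2 * s\<^sup>2 / 2)) * ?I \<le> exp (- (k\<^sup>2 * s\<^sup>2 / 2)) * exp ((k - 1)\<^sup>2 * s\<^sup>2 / 2)"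
      using k by (intro mult_left_mono integral_normal_density_cosh_minus_mult_sinh_le_exp assms) simp_all
    also have "\<dots> = exp (s\<^sup>2 / 2 - m)"
    proof -
      have "- (k\<^sup>2 * s\<^sup>2 / 2) + (k - 1)\<^sup>2 * s\<^sup>2 / 2 = s\<^sup>2 / 2 - m"
        using k(2) by (simp add: power2_eq_square field_simps)
      then show ?thesis
        by (metis exp_add)
    qed
    also have "\<dots> \<le> exp (- m / 2)"
      using False k(2) mult_right_mono[of 1 k "s\<^sup>2"] by simp
    finally show ?thesis
      unfolding eq using \<open>min (m\<^sup>2 / s\<^sup>2) m = m\<close> by simp
  qed
qed

lemma integral_normal_density_tanh_plus_u_sech2_affine_ge:
  assumes "q > 0" and "c > 0" and "b \<ge> 0"
  shows "1 - exp (- (min (q\<^sup>2 * c) b * b / q\<^sup>2) * a\<^sup>2 / 2)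
    \<le> (\<integral>y. normal_density 0 q y * tanh_plus_u_sech2 (a * c * (y + a * b)) \<partial>lborel)"
proof (cases "a = 0")
  case False
  define m where "m = a\<^sup>2 * (c * b)"
  define s where "s = \<bar>a * c\<bar> * q"
  have "a * c \<noteq> 0" and s: "s > 0" and m: "m \<ge> 0"
    using False assms by (simp_all add: s_def m_def)
  have int_f: "integrable lborel (\<lambda>u. normal_density m s u * tanh_plus_u_sech2 u)"
  proof (rule Bochner_Integration.integrable_bound)
    show "integrable lborel (\<lambda>u. normal_density m s u * 2)"
      using s by simp
    show "AE u in lborel. norm (normal_density m s u * tanh_plus_u_sech2 u) \<le> norm (normal_density m s u * 2)"
      using abs_tanh_plus_u_sech2_le by (auto simp: abs_mult intro!: mult_left_mono)
  qed measurable
  have "s\<^sup>2 = a\<^sup>2 * c\<^sup>2 * q\<^sup>2"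
    by (simp add: s_def power_mult_distrib)
  then have "m\<^sup>2 / s\<^sup>2 = a\<^sup>2 * (b\<^sup>2 / q\<^sup>2)"
    using False assms by (simp add: m_def power2_eq_square field_simps)
  then have "min (m\<^sup>2 / s\<^sup>2) m = a\<^sup>2 * min (b\<^sup>2 / q\<^sup>2) (c * b)"
    by (simp add: m_def min_mult_distrib_left)
  also have "min (b\<^sup>2 / q\<^sup>2) (c * b) = min (q\<^sup>2 * c) b * b / q\<^sup>2"
    using assms by (simp add: min_mult_distrib_right min_divide_distrib_right power2_eq_square min.commute)
  finally have K: "min (m\<^sup>2 / s\<^sup>2) m = min (q\<^sup>2 * c) b * b / q\<^sup>2 * a\<^sup>2"
    by simp
  have "(\<integral>y. normal_density 0 q y * tanh_plus_u_sech2 (a * c * (y + a * b)) \<partial>lborel)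
      = (\<integral>y. normal_density 0 q y * tanh_plus_u_sech2 ((a * c) * y + m) \<partial>lborel)"
    by (simp add: m_def power2_eq_square algebra_simps)
  also have "\<dots> = (\<integral>u. normal_density m s u * tanh_plus_u_sech2 u \<partial>lborel)"
    using integral_normal_density_affine[OF \<open>a * c \<noteq> 0\<close> assms(1), of 0] by (simp add: s_def)
  also have "\<dots> = 1 - (\<integral>u. normal_density m s u * (1 - tanh_plus_u_sech2 u) \<partial>lborel)"
    using int_f integrable_normal_density[OF s] integral_normal_density[OF s]
    by (simp add: right_diff_distrib)
  finally show ?thesis
    using integral_normal_density_one_minus_tanh_plus_u_sech2_le[OF s m] K by simp
qed (simp add: tanh_plus_u_sech2_def)

lemma (in pair_prob_space) integral_pair_le_const:
  fixes F :: "'a \<Rightarrow> 'b \<Rightarrow> real"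
  assumes "integrable (M1 \<Otimes>\<^sub>M M2) (case_prod F)"
    and "\<And>y. y \<in> space M2 \<Longrightarrow> (\<integral>x. F x y \<partial>M1) \<le> c"
  shows "integral\<^sup>L (M1 \<Otimes>\<^sub>M M2) (case_prod F) \<le> c"
proof -
  have "integral\<^sup>L (M1 \<Otimes>\<^sub>M M2) (case_prod F) = (\<integral>y. (\<integral>x. F x y \<partial>M1) \<partial>M2)"
    using integral_snd[OF assms(1)] by simp
  also have "\<dots> \<le> c"
    using assms by (intro M2.integral_le_const integrable_snd AE_I2)
  finally show ?thesis .
qed

lemma (in pair_prob_space) has_bochner_integral_le_integral_pair:
  fixes F :: "'a \<Rightarrow> 'b \<Rightarrow> real"
  assumes "integrable (M1 \<Otimes>\<^sub>M M2) (case_prod F)" and "has_bochner_integral M1 g l"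
    and "\<And>x. x \<in> space M1 \<Longrightarrow> g x \<le> (\<integral>y. F x y \<partial>M2)"
  shows "l \<le> integral\<^sup>L (M1 \<Otimes>\<^sub>M M2) (case_prod F)"
proof -
  have "l = integral\<^sup>L M1 g"
    using assms(2) by (simp add: has_bochner_integral_iff)
  also have "\<dots> \<le> (\<integral>x. (\<integral>y. F x y \<partial>M2) \<partial>M1)"
    using assms by (intro integral_mono_AE integrable_fst AE_I2) (auto simp: has_bochner_integral_iff)
  also have "\<dots> = integral\<^sup>L (M1 \<Otimes>\<^sub>M M2) (case_prod F)"
    using integral_fst[OF assms(1)] by simp
  finally show ?thesis .
qed

theorem lemma10:
  fixes b1 b1s b2s \<sigma> \<sigma>2 S :: real
  assumes "b1 > 0" and "b1s \<ge> 0" and "b2s \<ge> 0" and "\<sigma> > 0"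
    and "\<sigma>2 = sqrt (\<sigma>\<^sup>2 + b2s\<^sup>2)"
    and "S = (\<integral>p. (let u = fst p * b1 / \<sigma>\<^sup>2 * (snd p + fst p * b1s)
                     in tanh u + u * deriv tanh u)
              \<partial>(density lborel std_normal_density \<Otimes>\<^sub>M density lborel (normal_density 0 \<sigma>2)))"
  shows "1 - 1 / sqrt (1 + min (\<sigma>2\<^sup>2 / \<sigma>\<^sup>2 * b1) b1s * b1s / \<sigma>2\<^sup>2) \<le> S \<and> S \<le> 1"
proof -
  define c where "c = b1 / \<sigma>\<^sup>2"
  define K where "K = min (\<sigma>2\<^sup>2 * c) b1s * b1s / \<sigma>2\<^sup>2"
  define F where "F a y = tanh_plus_u_sech2 (a * c * (y + a * b1s))" for a y
  have \<sigma>2: "\<sigma>2 > 0"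
    using assms(4,5) by (simp add: add_pos_nonneg)
  have c: "c > 0" and K: "K \<ge> 0"
    using assms(1,2,4) \<sigma>2 by (simp_all add: c_def K_def)
  interpret pair_prob_space std_normal_distribution "density lborel (normal_density 0 \<sigma>2)"
    by (intro pair_prob_space.intro pair_sigma_finite.intro prob_space_imp_sigma_finite
        prob_space_normal_density \<sigma>2 zero_less_one)
  let ?P = "std_normal_distribution \<Otimes>\<^sub>M density lborel (normal_density 0 \<sigma>2)"
  have S: "S = integral\<^sup>L ?P (case_prod F)"
    using assms(6) by (simp add: F_def c_def deriv_tanh_real tanh_plus_u_sech2_def Let_def case_prod_unfold)
  have int: "integrable ?P (case_prod F)"
    using abs_tanh_plus_u_sech2_le
    by (intro integrable_const_bound[where B=2]) (auto simp: F_def case_prod_unfold)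
  have "S \<le> 1"
    unfolding S using integral_std_normal_tanh_plus_u_sech2_quadratic_le_1[of "c * b1s" "c * _"] c assms(2)
    by (intro integral_pair_le_const[OF int])
      (simp add: F_def integral_density power2_eq_square algebra_simps)
  moreover have "has_bochner_integral std_normal_distribution (\<lambda>a. 1 - exp (- K * a\<^sup>2 / 2))
      (1 - 1 / sqrt (1 + K))"
    using has_bochner_integral_std_normal_exp_neg_sq[of K] K
    by (intro has_bochner_integral_diff)
      (simp_all add: has_bochner_integral_iff M1.integrable_const M1.prob_space[simplified])
  then have "1 - 1 / sqrt (1 + K) \<le> S"
    unfolding S using integral_normal_density_tanh_plus_u_sech2_affine_ge[OF \<sigma>2 c assms(2)]
    by (intro has_bochner_integral_le_integral_pair[OF int]) (simp_all add: K_def F_def integral_density)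
  ultimately show ?thesis
    by (simp add: K_def c_def)
qed

end
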